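(* Assume the setting in the context (in particular Assumption (A)). Let $\rho>0$, $z_0\in V_f(\rho)$ and $\epsilon>0$, and run Algorithm $\mathcal{A}_*$ from $z_0$ with accuracy $\epsilon$. Then: (i) the number of calls to $\mathcal{A}_d$ is finite, i.e. $j_{out}$ is finite; (ii) the number of iterations of $\mathcal{A}$ performed at each call of $\mathcal{A}_d$ satisfies $m_{j+1}\leq\lceil4\bar n_\rho\rceil$ for all $j\in\{0,\dots,j_{out}\}$; (iii) the total number $N_{\mathcal{A}}=\sum_{j=0}^{j_{out}}m_{j+1}$ of iterations of $\mathcal{A}$ performed by Algorithm $\mathcal{A}_*$ satisfies $$N_{\mathcal{A}}\leq\frac{e\lceil4\bar n_\rho\rceil}{2}\left\lceil5+\frac{1}{\ln15}\ln\left(1+\frac{f(z_0)-f^*}{\epsilon}\right)\right\rceil.$$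
   Context: Let $f:\mathbb{R}^n\to(-\infty,\infty]$ be a proper closed convex function such that the problem $f^*=\min_{x\in\mathbb{R}^n}f(x)$ is solvable. Let $\Omega_f=\{x: f(x)=f^*\}$, fix a norm $\|\cdot\|$ on $\mathbb{R}^n$ with dual norm $\|y\|_*=\sup\{y^Tz:\|z\|\leq 1\}$, and for $x\in\mathbb{R}^n$ let $\bar x=\arg\min_{z\in\Omega_f}\|x-z\|$. For $\rho\geq0$ let $V_f(\rho)=\{x: f(x)-f^*\leq\rho\}$. Let $\mathcal{A}$ be an iterative algorithm: for $x_0\in\mathrm{dom} f$ and integer $k\geq1$, $\mathcal{A}(x_0,k)$ denotes its $k$-th iterate started from $x_0$ (and $\mathcal{A}(x_0,0)=x_0$). Assumption (A): (i) for every $\rho>0$ there is $\mu_\rho>0$ with $f(x_0)-f^*\geq\frac{\mu_\rho}{2}\|x_0-\bar x_0\|^2$ for all $x_0\in V_f(\rho)$; (ii) there exist $a_f>0$, $L_f>0$ and $g:\mathbb{R}^n\to\mathbb{R}^n$ with $g(x)=0\iff x\in\Omega_f$ such that for every $x_0\in\mathrm{dom} f$: $f(\mathcal{A}(x_0,1))\leq f(x_0)-\frac{1}{2L_f}\|g(x_0)\|_*^2$ and $f(\mathcal{A}(x_0,k))-f^*\leq\frac{a_f}{(k+1)^2}\|x_0-\bar x_0\|^2$ for all $k\geq1$; (iii) $\bar n_\rho:=\max\{\frac12,\sqrt{2a_f/\mu_\rho}\}$. Procedure $\mathcal{A}_d(r,n)$ (input $r\in\mathrm{dom} f$, $n\in\mathbb{R}$):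 set $x_0=r$, $k=0$. Repeat: $k\gets k+1$; set $x_k=\mathcal{A}(x_0,k)$ if $f(\mathcal{A}(x_0,k))\leq f(x_{k-1})$, and $x_k=x_{k-1}$ otherwise; $\ell=\lfloor k/2\rfloor$; until $k\geq n$ and $f(x_\ell)-f(x_k)\leq\frac13(f(x_0)-f(x_\ell))$. Output $z=x_k$, $m=k$ (so $m$ iterations of $\mathcal{A}$ are performed). Algorithm $\mathcal{A}_*(z_0)$ (input $z_0\in\mathrm{dom} f$, $\epsilon>0$): set $m_0=1$, $m_{-1}=1$, $j=-1$. Repeat: $j\gets j+1$; $s_j=\sqrt{\frac{f(z_{j-1})-f(z_j)}{f(z_{j-2})-f(z_j)}}$ if $j\geq2$ and $s_j=0$ otherwise; $n_j=\max\{m_j,4s_jm_{j-1}\}$; $[z_{j+1},m_{j+1}]=\mathcal{A}_d(z_j,n_j)$; until $f(z_j)-f(z_{j+1})\leq\epsilon$. Output $z_{out}=z_{j+1}$, $j_{out}=j$. Here $e$ is Euler's number. *)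

theory Defs
  imports "HOL-Analysis.Analysis"
begin

definition proper_fun :: "('a \<Rightarrow> ereal) \<Rightarrow> bool" where
  "proper_fun f \<longleftrightarrow> (\<forall>x. f x \<noteq> -\<infinity>) \<and> (\<exists>x. f x \<noteq> \<infinity>)"

definition epigraph :: "('a \<Rightarrow> ereal) \<Rightarrow> ('a \<times> real) set" where
  "epigraph f = {(x, t). f x \<le> ereal t}"

definition convex_fun :: "('a::real_vector \<Rightarrow> ereal) \<Rightarrow> bool" where
  "convex_fun f \<longleftrightarrow> convex (epigraph f)"

definition closed_fun :: "('a::topological_space \<Rightarrow> ereal) \<Rightarrow> bool" where
  "closed_fun f \<longleftrightarrow> closed (epigraph f)"

definition effdom :: "('a \<Rightarrow> ereal) \<Rightarrow> 'a set" where
  "effdom f = {x. f x \<noteq> \<infinity>}"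

definition fmin :: "('a \<Rightarrow> ereal) \<Rightarrow> ereal" where
  "fmin f = (INF x. f x)"

definition solvable :: "('a \<Rightarrow> ereal) \<Rightarrow> bool" where
  "solvable f \<longleftrightarrow> (\<exists>x. \<forall>y. f x \<le> f y)"

definition Omega :: "('a \<Rightarrow> ereal) \<Rightarrow> 'a set" where
  "Omega f = {x. f x = fmin f}"

definition Vlev :: "('a \<Rightarrow> ereal) \<Rightarrow> real \<Rightarrow> 'a set" where
  "Vlev f \<rho> = {x. f x - fmin f \<le> ereal \<rho>}"

definition is_norm :: "('a::real_vector \<Rightarrow> real) \<Rightarrow> bool" where
  "is_norm N \<longleftrightarrow> (\<forall>x. N x = 0 \<longleftrightarrow> x = 0) \<and> (\<forall>c x. N (c *\<^sub>R x) = \<bar>c\<bar> * N x)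
     \<and> (\<forall>x y. N (x + y) \<le> N x + N y)"

definition dual_norm :: "('a::real_inner \<Rightarrow> real) \<Rightarrow> 'a \<Rightarrow> real" where
  "dual_norm N y = Sup {y \<bullet> z | z. N z \<le> 1}"

definition xbar :: "('a::real_vector \<Rightarrow> real) \<Rightarrow> ('a \<Rightarrow> ereal) \<Rightarrow> 'a \<Rightarrow> 'a" where
  "xbar N f x = (SOME z. z \<in> Omega f \<and> (\<forall>w\<in>Omega f. N (x - z) \<le> N (x - w)))"

text \<open>Assumption (A) (i)-(ii); mu is the map rho |-> mu_rho.\<close>
definition assumptionA ::
  "('a::real_inner \<Rightarrow> real) \<Rightarrow> ('a \<Rightarrow> ereal) \<Rightarrow> ('a \<Rightarrow> nat \<Rightarrow> 'a) \<Rightarrow> (real \<Rightarrow> real)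
     \<Rightarrow> real \<Rightarrow> real \<Rightarrow> ('a \<Rightarrow> 'a) \<Rightarrow> bool" where
  "assumptionA N f A mu a L g \<longleftrightarrow>
     (\<forall>\<rho>>0. mu \<rho> > 0 \<and> (\<forall>x0\<in>Vlev f \<rho>.
         f x0 - fmin f \<ge> ereal (mu \<rho> / 2 * (N (x0 - xbar N f x0))\<^sup>2)))
   \<and> a > 0 \<and> L > 0 \<and> (\<forall>x. g x = 0 \<longleftrightarrow> x \<in> Omega f)
   \<and> (\<forall>x0\<in>effdom f.
        f (A x0 1) \<le> f x0 - ereal (1 / (2 * L) * (dual_norm N (g x0))\<^sup>2)
      \<and> (\<forall>k\<ge>1. f (A x0 k) - fmin f \<le> ereal (a / (real k + 1)\<^sup>2 * (N (x0 - xbar N f x0))\<^sup>2)))"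

definition nbar :: "real \<Rightarrow> real \<Rightarrow> real" where
  "nbar a mu_rho = max (1/2) (sqrt (2 * a / mu_rho))"

fun Ad_x :: "('a \<Rightarrow> ereal) \<Rightarrow> ('a \<Rightarrow> nat \<Rightarrow> 'a) \<Rightarrow> 'a \<Rightarrow> nat \<Rightarrow> 'a" where
  "Ad_x f A r 0 = r"
| "Ad_x f A r (Suc k) =
     (if f (A r (Suc k)) \<le> f (Ad_x f A r k) then A r (Suc k) else Ad_x f A r k)"

definition Ad_stop :: "('a \<Rightarrow> ereal) \<Rightarrow> ('a \<Rightarrow> nat \<Rightarrow> 'a) \<Rightarrow> 'a \<Rightarrow> real \<Rightarrow> nat \<Rightarrow> bool" where
  "Ad_stop f A r n k \<longleftrightarrow> k \<ge> 1 \<and> real k \<ge> n \<and>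
     f (Ad_x f A r (k div 2)) - f (Ad_x f A r k) \<le> (f r - f (Ad_x f A r (k div 2))) / 3"

definition Ad_m :: "('a \<Rightarrow> ereal) \<Rightarrow> ('a \<Rightarrow> nat \<Rightarrow> 'a) \<Rightarrow> 'a \<Rightarrow> real \<Rightarrow> nat" where
  "Ad_m f A r n = (LEAST k. Ad_stop f A r n k)"

definition Ad_z :: "('a \<Rightarrow> ereal) \<Rightarrow> ('a \<Rightarrow> nat \<Rightarrow> 'a) \<Rightarrow> 'a \<Rightarrow> real \<Rightarrow> 'a" where
  "Ad_z f A r n = Ad_x f A r (Ad_m f A r n)"

definition Astar_nval :: "('a \<Rightarrow> ereal) \<Rightarrow> 'a \<Rightarrow> 'a \<Rightarrow> 'a \<Rightarrow> nat \<Rightarrow> nat \<Rightarrow> nat \<Rightarrow> real" where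
  "Astar_nval f zjm2 zjm1 zj mjm1 mj j =
     (let s = (if 2 \<le> j then sqrt (real_of_ereal (f zjm1 - f zj) / real_of_ereal (f zjm2 - f zj))
               else 0)
      in max (real mj) (4 * s * real mjm1))"

text \<open>Astar_zm f A z0 j = (z_j, m_j), with m_0 = 1 (and m_{-1} = 1).\<close>
fun Astar_zm :: "('a \<Rightarrow> ereal) \<Rightarrow> ('a \<Rightarrow> nat \<Rightarrow> 'a) \<Rightarrow> 'a \<Rightarrow> nat \<Rightarrow> 'a \<times> nat" where
  "Astar_zm f A z0 0 = (z0, 1)"
| "Astar_zm f A z0 (Suc j) =
     (let n = Astar_nval f (fst (Astar_zm f A z0 (j - 2))) (fst (Astar_zm f A z0 (j - 1)))
                (fst (Astar_zm f A z0 j))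
                (if j = 0 then 1 else snd (Astar_zm f A z0 (j - 1))) (snd (Astar_zm f A z0 j)) j
      in (Ad_z f A (fst (Astar_zm f A z0 j)) n, Ad_m f A (fst (Astar_zm f A z0 j)) n))"

abbreviation Astar_z where "Astar_z f A z0 j \<equiv> fst (Astar_zm f A z0 j)"
abbreviation Astar_m where "Astar_m f A z0 j \<equiv> snd (Astar_zm f A z0 j)"

definition Astar_n :: "('a \<Rightarrow> ereal) \<Rightarrow> ('a \<Rightarrow> nat \<Rightarrow> 'a) \<Rightarrow> 'a \<Rightarrow> nat \<Rightarrow> real" where
  "Astar_n f A z0 j = Astar_nval f (Astar_z f A z0 (j - 2)) (Astar_z f A z0 (j - 1))
      (Astar_z f A z0 j) (if j = 0 then 1 else Astar_m f A z0 (j - 1)) (Astar_m f A z0 j) j"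

definition Astar_stop :: "('a \<Rightarrow> ereal) \<Rightarrow> ('a \<Rightarrow> nat \<Rightarrow> 'a) \<Rightarrow> 'a \<Rightarrow> real \<Rightarrow> nat \<Rightarrow> bool" where
  "Astar_stop f A z0 \<epsilon> j \<longleftrightarrow> f (Astar_z f A z0 j) - f (Astar_z f A z0 (Suc j)) \<le> ereal \<epsilon>"

definition Astar_jout :: "('a \<Rightarrow> ereal) \<Rightarrow> ('a \<Rightarrow> nat \<Rightarrow> 'a) \<Rightarrow> 'a \<Rightarrow> real \<Rightarrow> nat" where
  "Astar_jout f A z0 \<epsilon> = (LEAST j. Astar_stop f A z0 \<epsilon> j)"

end

theory Submission
  imports Defs
begin

text \<open>
  By Assumption (A), a call of A_d started in V_f(rho) contracts the optimality gap by the factor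
  nbar^2 / (m + 1)^2, where m is its number of iterations. Hence A_d stops as soon as
  k >= max(n, 4 nbar), and the ratio s_j used by A_* is at most nbar / (m_(j-1) + 1), so that
  n_j <= max(m_j, 4 nbar) and inductively m_j <= ceil(4 nbar) =: M.

  For the total count, u_j = log_15((f(z_j) - f(z_(j+1))) / eps) is a potential with values in
  [0, log_15(1 + (f(z_0) - f^*) / eps)] while A_* runs. The rule n_j >= 4 s_j m_(j-1) makes every
  step with m_(j+1) < 3.9 m_(j-1) pay for itself by a drop of the potential,
  m_(j+1) <= 3 (m_(j+1) - m_(j-1)) + m_(j-1) (u_(j-2) - u_(j-1)), while the steps with
  m_(j+1) >= 3.9 m_(j-1) grow geometrically. Summation by parts then bounds N_A by
  6 M + (39/29) M log_15(1 + (f(z_0) - f^*) / eps), and 39/29 < e/2.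
\<close>

lemma ln_15_ge_2: "2 \<le> ln (15::real)"
proof -
  have "exp (2::real) = exp 1 * exp 1" by (simp flip: exp_add)
  also have "\<dots> \<le> 3 * 3" using exp_le by (intro mult_mono) auto
  finally show ?thesis by (simp add: ln_ge_iff)
qed

lemma sq_div_le_15_powr:
  fixes x :: real
  assumes "1 \<le> x" "x < 39/10"
  shows "x\<^sup>2 / (16 - x\<^sup>2) \<le> 15 powr (2 * x - 3)"
proof -
  have "x\<^sup>2 < 4\<^sup>2" using assms by (intro power_strict_mono) auto
  then have pos: "0 < 16 - x\<^sup>2" by simp
  consider "x \<le> 2" | "2 \<le> x" "x \<le> 7/2" | "7/2 \<le> x" by linarith
  then show ?thesis
  proof cases
    case 1
    have "1 + 2 * (x - 1) * ln 15 \<le> 15 powr (2 * (x - 1))"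
      using exp_ge_add_one_self[of "2 * (x - 1) * ln 15"] by (simp add: powr_def)
    moreover have "2 * (x - 1) * 2 \<le> 2 * (x - 1) * ln 15"
      using ln_15_ge_2 assms(1) by (intro mult_left_mono) auto
    moreover have "15 powr (2 * x - 3) = 15 powr (2 * (x - 1)) / 15"
      using powr_diff[of 15 "2 * (x - 1)" 1] by (simp add: algebra_simps)
    ultimately have "(4 * x - 3) / 15 \<le> 15 powr (2 * x - 3)" by simp
    moreover have "x\<^sup>2 * 15 \<le> (4 * x - 3) * (16 - x\<^sup>2)"
    proof -
      have "(4 * x - 3) * (16 - x\<^sup>2) - x\<^sup>2 * 15 = 4 * (x - 1) * (x + 6) * (2 - x)"
        by (simp add: algebra_simps power2_eq_square)
      also have "\<dots> \<ge> 0" using 1 assms by simp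
      finally show ?thesis by simp
    qed
    then have "x\<^sup>2 / (16 - x\<^sup>2) \<le> (4 * x - 3) / 15" using pos by (simp add: divide_simps)
    ultimately show ?thesis by linarith
  next
    case 2
    have "x\<^sup>2 \<le> (7/2)\<^sup>2" "2\<^sup>2 \<le> x\<^sup>2" using 2 by (intro power_mono; simp)+
    then have "x\<^sup>2 / (16 - x\<^sup>2) \<le> 15" using pos by (simp add: divide_simps)
    moreover have "15 powr 1 \<le> 15 powr (2 * x - 3)" using 2 by (intro powr_mono) auto
    ultimately show ?thesis by simp
  next
    case 3
    have "x\<^sup>2 \<le> (39/10)\<^sup>2" "(7/2)\<^sup>2 \<le> x\<^sup>2" using 3 assms by (intro power_mono; simp)+
    then have "x\<^sup>2 / (16 - x\<^sup>2) \<le> 225" using pos by (simp add: divide_simps)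
    moreover have "15 powr 2 \<le> 15 powr (2 * x - 3)" using 3 by (intro powr_mono) auto
    ultimately show ?thesis by (simp add: powr_numeral)
  qed
qed

lemma restart_step_le:
  fixes a b D0 D1 :: real
  assumes a: "1 \<le> a" "a \<le> b" and D: "0 < D0" "0 < D1"
    and growth: "4 * a * sqrt (D1 / (D0 + D1)) \<le> b"
  shows "b \<le> 3 * (b - a) + (if 39/10 * a \<le> b then 0 else a * log 15 (D0 / D1))"
proof (cases "39/10 * a \<le> b")
  case True
  then show ?thesis using a by simp
next
  case False
  define x where "x = b / a"
  have x: "1 \<le> x" "x < 39/10" "b = a * x" using a False by (auto simp: x_def field_simps)
  have "sqrt (D1 / (D0 + D1)) \<le> x / 4" using growth a x(3) by (simp add: field_simps)
  then have "(sqrt (D1 / (D0 + D1)))\<^sup>2 \<le> (x / 4)\<^sup>2" using D by (intro power_mono) auto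
  then have "D1 * (16 - x\<^sup>2) \<le> x\<^sup>2 * D0" using D by (simp add: field_simps power_divide)
  moreover have "x\<^sup>2 < 4\<^sup>2" using x by (intro power_strict_mono) auto
  ultimately have "D1 / D0 \<le> x\<^sup>2 / (16 - x\<^sup>2)" using D by (simp add: field_simps)
  also have "\<dots> \<le> 15 powr (2 * x - 3)" using x(1,2) by (rule sq_div_le_15_powr)
  finally have "log 15 (D1 / D0) \<le> 2 * x - 3" using D by (simp add: log_le_iff)
  moreover have "log 15 (D0 / D1) = - log 15 (D1 / D0)" using D by (simp add: log_divide)
  ultimately have "3 * a - 2 * b \<le> a * log 15 (D0 / D1)"
    using a x(3) mult_left_mono[of "log 15 (D1 / D0)" "2 * x - 3" a] by (simp add: algebra_simps)
  then show ?thesis using False by simp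
qed

definition up_variation :: "(nat \<Rightarrow> real) \<Rightarrow> nat \<Rightarrow> real" where
  "up_variation v n = (\<Sum>i<n. max 0 (v (Suc i) - v i))"

lemma up_variation_Suc [simp]:
  "up_variation v (Suc n) = up_variation v n + max 0 (v (Suc n) - v n)"
  by (simp add: up_variation_def)

lemma up_variation_incseq:
  assumes "\<And>i. v i \<le> v (Suc i)"
  shows "up_variation v n = v n - v 0"
  using assms by (induction n) (auto simp: up_variation_def)

lemma sum_by_parts_le_up_variation:
  fixes v w :: "nat \<Rightarrow> real"
  assumes "v 0 = 0" "0 \<le> v n" and w: "\<And>i. i \<le> n \<Longrightarrow> 0 \<le> w i \<and> w i \<le> B"
  shows "(\<Sum>i<n. v (Suc i) * (w i - w (Suc i))) \<le> B * up_variation v n"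
proof -
  have "(\<Sum>i<k. v (Suc i) * (w i - w (Suc i))) + v k * w k \<le> B * up_variation v k" if "k \<le> n" for k
    using that
  proof (induction k)
    case 0
    then show ?case using assms(1) by (simp add: up_variation_def)
  next
    case (Suc k)
    have "(v (Suc k) - v k) * w k \<le> max 0 (v (Suc k) - v k) * B"
      using w[of k] Suc.prems by (intro mult_mono) auto
    then show ?case using Suc by (simp add: algebra_simps)
  qed
  moreover have "0 \<le> v n * w n" using assms(2) w[of n] by simp
  ultimately show ?thesis by fastforce
qed

text \<open>Each maximal run of consecutive indices in \<open>G\<close> contributes at most the last value of
  \<open>l\<close> on it, and these last values grow by the factor \<open>t\<close> from one run to the next.\<close>

lemma up_variation_gapped:
  fixes l :: "nat \<Rightarrow> real"
  assumes t: "1 < t" and l: "\<And>i. 0 \<le> l i" "\<And>i. l i \<le> l (Suc i)"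
    and gap: "\<And>i. i \<in> G \<Longrightarrow> t * l i \<le> l (i + 2)"
  shows "up_variation (\<lambda>i. case i of 0 \<Rightarrow> 0 | Suc j \<Rightarrow> if j \<in> G then l j else 0) n
    \<le> l (Suc n) / (t - 1)"
proof -
  define V where "V = up_variation (\<lambda>i. case i of 0 \<Rightarrow> 0 | Suc j \<Rightarrow> if j \<in> G then l j else 0)"
  have inv: "(t - 1) * V (Suc k) \<le> (if k \<in> G then t * l k else l (Suc k))" for k
  proof (induction k)
    case 0
    then show ?case using l[of 0] by (simp add: V_def up_variation_def algebra_simps)
  next
    case (Suc k)
    then show ?case
      using t l[of k] l[of "Suc k"] l(2)[of "Suc k"] gap[of k]
      by (auto simp: V_def algebra_simps split: if_splits)
  qed
  show ?thesis
  proof (cases n)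
    case 0
    then show ?thesis using t l by (simp add: up_variation_def)
  next
    case (Suc k)
    have "(t - 1) * V n \<le> l (Suc n)"
      using inv[of k] gap[of k] l(2)[of n] Suc by (auto split: if_splits)
    then show ?thesis using t by (simp add: V_def field_simps)
  qed
qed

text \<open>Skipping the fast-growth steps amounts to taking all descents of \<open>u\<close> and adding back
  the ascents at the fast-growth steps; both are Abel sums.\<close>

lemma sum_gapped_descents_le:
  fixes l u :: "nat \<Rightarrow> real"
  assumes t: "1 < t" and l: "\<And>i. 0 \<le> l i" "\<And>i. l i \<le> l (Suc i)" "\<And>i. l i \<le> M"
    and u: "\<And>i. i \<le> n \<Longrightarrow> 0 \<le> u i \<and> u i \<le> B"
  shows "(\<Sum>i<n. if t * l i \<le> l (i + 2) then 0 else l i * (u i - u (Suc i))) \<le> t / (t - 1) * M * B"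
proof -
  define G where "G = {i. t * l i \<le> l (i + 2)}"
  define l_shift :: "nat \<Rightarrow> real" where "l_shift i = (case i of 0 \<Rightarrow> 0 | Suc j \<Rightarrow> l j)" for i
  define l_gap :: "nat \<Rightarrow> real" where "l_gap i = (case i of 0 \<Rightarrow> 0 | Suc j \<Rightarrow> if j \<in> G then l j else 0)" for i
  have B: "0 \<le> B" using u[of 0] by simp
  have M: "0 \<le> M" using l(1)[of 0] l(3)[of 0] by simp
  have "(\<Sum>i<n. l_shift (Suc i) * (u i - u (Suc i))) \<le> B * up_variation l_shift n"
    using u l(1) by (intro sum_by_parts_le_up_variation) (auto simp: l_shift_def split: nat.split)
  also have "\<dots> \<le> B * M"
    using l B M by (subst up_variation_incseq) (auto simp: l_shift_def intro!: mult_left_mono split: nat.split)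
  finally have descents: "(\<Sum>i<n. l_shift (Suc i) * (u i - u (Suc i))) \<le> B * M" .
  have "(\<Sum>i<n. l_gap (Suc i) * ((B - u i) - (B - u (Suc i)))) \<le> B * up_variation l_gap n"
    using u l(1) by (intro sum_by_parts_le_up_variation) (auto simp: l_gap_def split: nat.split)
  also have "\<dots> \<le> B * (l (Suc n) / (t - 1))"
    unfolding l_gap_def G_def using t l B by (intro mult_left_mono up_variation_gapped) auto
  also have "\<dots> \<le> B * (M / (t - 1))" using t l(3) B by (intro mult_left_mono divide_right_mono) auto
  finally have ascents: "(\<Sum>i<n. l_gap (Suc i) * ((B - u i) - (B - u (Suc i)))) \<le> B * (M / (t - 1))" .
  have "(\<Sum>i<n. if t * l i \<le> l (i + 2) then 0 else l i * (u i - u (Suc i)))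
      = (\<Sum>i<n. l_shift (Suc i) * (u i - u (Suc i))) + (\<Sum>i<n. l_gap (Suc i) * ((B - u i) - (B - u (Suc i))))"
    by (auto simp: l_shift_def l_gap_def G_def algebra_simps simp flip: sum.distrib intro!: sum.cong)
  also have "\<dots> \<le> B * M + B * (M / (t - 1))" using descents ascents by linarith
  also have "\<dots> = t / (t - 1) * M * B" using t by (simp add: field_simps)
  finally show ?thesis .
qed

lemma sum_restart_lengths_le:
  fixes m D :: "nat \<Rightarrow> real"
  assumes m_mono: "\<And>i. m i \<le> m (Suc i)" and m_ge: "\<And>i. 1 \<le> m i" and m_le: "\<And>i. m i \<le> M"
    and D: "\<And>i. i < T \<Longrightarrow> \<epsilon> < D i \<and> log 15 (D i / \<epsilon>) \<le> B" and "0 < \<epsilon>" "0 \<le> B"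
    and growth: "\<And>i. i + 2 \<le> T \<Longrightarrow> 4 * m (i + 1) * sqrt (D (i + 1) / (D i + D (i + 1))) \<le> m (i + 3)"
  shows "(\<Sum>j\<le>T. m (Suc j)) \<le> 6 * M + 39/29 * M * B"
proof (cases T)
  case 0
  have "0 \<le> M * B" using m_ge[of 0] m_le[of 0] \<open>0 \<le> B\<close> by simp
  then show ?thesis using 0 m_le[of 1] m_ge[of 1] by simp
next
  case (Suc n)
  define u where "u i = log 15 (D i / \<epsilon>)" for i
  have u: "0 \<le> u i \<and> u i \<le> B" if "i \<le> n" for i
    using D[of i] that Suc \<open>0 < \<epsilon>\<close> by (auto simp: u_def)
  have step: "m (i + 3) \<le> 3 * (m (i + 3) - m (i + 1))
      + (if 39/10 * m (i + 1) \<le> m (i + 3) then 0 else m (i + 1) * (u i - u (Suc i)))"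
    if "i < n" for i
  proof -
    have "m (i + 1) \<le> m (i + 3)" using m_mono[of "i + 1"] m_mono[of "i + 2"] by (simp add: numeral_eq_Suc)
    moreover have log: "log 15 (D i / D (i + 1)) = u i - u (Suc i)"
      using D[of i] D[of "Suc i"] that Suc \<open>0 < \<epsilon>\<close> by (simp add: u_def log_divide)
    ultimately show ?thesis
      using restart_step_le[OF m_ge _ _ _ growth, of i, unfolded log] D[of i] D[of "Suc i"] that Suc
        \<open>0 < \<epsilon>\<close>
      by (simp add: numeral_eq_Suc)
  qed
  have "(\<Sum>i<n. m (i + 3)) \<le> 3 * (\<Sum>i<n. m (i + 3) - m (i + 1))
      + (\<Sum>i<n. if 39/10 * m (i + 1) \<le> m (i + 3) then 0 else m (i + 1) * (u i - u (Suc i)))"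
    using step by (simp add: sum_distrib_left flip: sum.distrib) (intro sum_mono, simp)
  also have "\<dots> \<le> 3 * (m (n + 2) + m (n + 1) - m 2 - m 1) + 39/29 * M * B"
  proof -
    have "(\<Sum>i<k. m (i + 3) - m (i + 1)) = m (k + 2) + m (k + 1) - m 2 - m 1" for k
      by (induction k) (simp_all add: numeral_eq_Suc)
    moreover have "(\<Sum>i<n. if 39/10 * m (i + 1) \<le> m (i + 2 + 1) then 0 else m (i + 1) * (u i - u (Suc i)))
        \<le> 39/10 / (39/10 - 1) * M * B"
      using u m_ge m_mono m_le
      by (intro sum_gapped_descents_le[where l = "\<lambda>i. m (i + 1)"]) (auto intro: order_trans[OF zero_le_one])
    ultimately show ?thesis by (simp add: numeral_eq_Suc)
  qed
  finally have "(\<Sum>i<n. m (i + 3)) \<le> 3 * (m (n + 2) + m (n + 1) - m 2 - m 1) + 39/29 * M * B" .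
  moreover have "(\<Sum>j\<le>Suc k. m (Suc j)) = m 1 + m 2 + (\<Sum>i<k. m (i + 3))" for k
    by (induction k) (simp_all add: numeral_eq_Suc)
  ultimately show ?thesis
    unfolding Suc using m_le[of "n + 1"] m_le[of "n + 2"] m_ge[of 1] m_ge[of 2] by (simp add: algebra_simps)
qed

lemma diff_ratio_le:
  fixes a b c q :: real
  assumes "0 \<le> c" "c \<le> b" "b \<le> a" "b \<le> q * a" "0 \<le> q"
  shows "(b - c) / (a - c) \<le> q"
proof (cases "a = c")
  case False
  then have ac: "0 < a - c" using assms by simp
  have "b * c \<le> a * c" using assms by (intro mult_right_mono) auto
  then have "(b - c) * a \<le> b * (a - c)" by (simp add: algebra_simps)
  also have "\<dots> \<le> (q * a) * (a - c)" using assms ac by (intro mult_right_mono) auto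
  finally have "(b - c) * a \<le> (q * (a - c)) * a" by (simp add: algebra_simps)
  then have "b - c \<le> q * (a - c)" using ac assms by (simp add: mult_le_cancel_right_pos)
  then show ?thesis using ac by (simp add: divide_simps)
qed (use assms in simp)

lemma restart_constant_le:
  fixes M B :: real
  assumes "0 \<le> M" "0 \<le> B"
  shows "6 * M + 39/29 * M * B \<le> exp 1 * M / 2 * real_of_int \<lceil>5 + B\<rceil>"
proof -
  have "6 * M + 39/29 * M * B \<le> 39/29 * M * (5 + B)" using assms by (simp add: algebra_simps)
  also have "\<dots> \<le> 39/29 * M * real_of_int \<lceil>5 + B\<rceil>" using assms by (intro mult_left_mono) auto
  also have "\<dots> \<le> exp 1 / 2 * M * real_of_int \<lceil>5 + B\<rceil>"
    using e_approx_32 assms by (intro mult_right_mono) (auto simp: abs_if split: if_split_asm)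
  finally show ?thesis by simp
qed

lemma Ad_x_Suc_le: "f (Ad_x f A r (Suc k)) \<le> f (Ad_x f A r k)"
  by auto

lemma Ad_x_le_A: "1 \<le> k \<Longrightarrow> f (Ad_x f A r k) \<le> f (A r k)"
  by (cases k) auto

lemma Ad_x_antimono: "j \<le> k \<Longrightarrow> f (Ad_x f A r k) \<le> f (Ad_x f A r j)"
proof (induction k)
  case (Suc k)
  then show ?case by (cases "j = Suc k") (auto intro: order_trans[OF Ad_x_Suc_le])
qed simp

lemma Ad_x_le: "f (Ad_x f A r k) \<le> f r"
  using Ad_x_antimono[of 0 k] by simp

lemma Vlev_le: "x \<in> Vlev f \<rho> \<Longrightarrow> f y \<le> f x \<Longrightarrow> y \<in> Vlev f \<rho>"
  unfolding Vlev_def by (auto intro: order_trans ereal_minus_mono)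

lemma Astar_zm_Suc_eq:
  "Astar_zm f A z0 (Suc j) =
    (Ad_z f A (Astar_z f A z0 j) (Astar_n f A z0 j), Ad_m f A (Astar_z f A z0 j) (Astar_n f A z0 j))"
  unfolding Astar_zm.simps(2) Astar_n_def Let_def by (rule refl)

declare Astar_zm.simps(2) [simp del]

locale restart_setting =
  fixes f :: "'a::real_inner \<Rightarrow> ereal" and N :: "'a \<Rightarrow> real"
    and A :: "'a \<Rightarrow> nat \<Rightarrow> 'a" and mu :: "real \<Rightarrow> real"
    and a L :: real and g :: "'a \<Rightarrow> 'a" and \<rho> :: real
  assumes proper: "proper_fun f" and solvable: "solvable f"
    and assumption_A: "assumptionA N f A mu a L g" and rho_pos: "0 < \<rho>"
begin

definition fstar :: real where "fstar = real_of_ereal (fmin f)"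

text \<open>\<open>F\<close> is meaningful only where \<open>f\<close> is finite: \<open>real_of_ereal\<close> sends \<open>\<infinity>\<close> to \<open>0\<close>.\<close>

definition F :: "'a \<Rightarrow> real" where "F x = real_of_ereal (f x)"

abbreviation nb :: real where "nb \<equiv> nbar a (mu \<rho>)"

lemma fmin_eq: "fmin f = ereal fstar"
proof -
  obtain x where x: "\<And>y. f x \<le> f y" using solvable unfolding solvable_def by blast
  have "fmin f = f x" unfolding fmin_def by (rule antisym) (auto intro: INF_lower INF_greatest x)
  moreover obtain y where "f y \<noteq> \<infinity>" using proper unfolding proper_fun_def by blast
  then have "f x \<noteq> \<infinity>" using x[of y] by auto
  moreover have "f x \<noteq> -\<infinity>" using proper unfolding proper_fun_def by blast
  ultimately show ?thesis unfolding fstar_def by (cases "f x") auto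
qed

lemma f_eq_F: "f x \<noteq> \<infinity> \<Longrightarrow> f x = ereal (F x)"
  using proper unfolding proper_fun_def F_def by (cases "f x") auto

lemma fstar_le_F: "f x \<noteq> \<infinity> \<Longrightarrow> fstar \<le> F x"
  using INF_lower[of x UNIV f] f_eq_F[of x] unfolding fmin_def[symmetric] fmin_eq by simp

lemma Vlev_iff: "x \<in> Vlev f \<rho> \<longleftrightarrow> f x \<noteq> \<infinity> \<and> F x - fstar \<le> \<rho>"
  using proper unfolding Vlev_def fmin_eq proper_fun_def by (cases "f x") (auto simp: F_def)

lemma nb_ge_half: "1/2 \<le> nb"
  unfolding nbar_def by simp

lemma gap_A_le:
  assumes x0: "x0 \<in> Vlev f \<rho>" and k: "1 \<le> k"
  shows "f (A x0 k) \<noteq> \<infinity>" "F (A x0 k) - fstar \<le> nb\<^sup>2 / (real k + 1)\<^sup>2 * (F x0 - fstar)"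
proof -
  define d where "d = N (x0 - xbar N f x0)"
  have x0_fin: "f x0 \<noteq> \<infinity>" using x0 Vlev_iff by auto
  have mu: "0 < mu \<rho>" and a: "0 < a" using assumption_A rho_pos unfolding assumptionA_def by auto
  have "ereal (mu \<rho> / 2 * d\<^sup>2) \<le> f x0 - fmin f"
    using assumption_A rho_pos x0 unfolding assumptionA_def d_def by blast
  then have growth: "d\<^sup>2 \<le> 2 / mu \<rho> * (F x0 - fstar)"
    using mu f_eq_F[OF x0_fin] unfolding fmin_eq by (simp add: field_simps)
  have rate_ereal: "f (A x0 k) - fmin f \<le> ereal (a / (real k + 1)\<^sup>2 * d\<^sup>2)"
    using assumption_A x0_fin k unfolding assumptionA_def d_def effdom_def by blast
  then show fin: "f (A x0 k) \<noteq> \<infinity>" unfolding fmin_eq by auto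
  have rate: "F (A x0 k) - fstar \<le> a / (real k + 1)\<^sup>2 * d\<^sup>2"
    using rate_ereal f_eq_F[OF fin] unfolding fmin_eq by simp
  have "sqrt (2 * a / mu \<rho>) \<le> nb" unfolding nbar_def by simp
  then have "(sqrt (2 * a / mu \<rho>))\<^sup>2 \<le> nb\<^sup>2" using a mu by (intro power_mono) auto
  then have nb: "2 * a / mu \<rho> \<le> nb\<^sup>2" using a mu by simp
  note rate
  also have "a / (real k + 1)\<^sup>2 * d\<^sup>2 \<le> a / (real k + 1)\<^sup>2 * (2 / mu \<rho> * (F x0 - fstar))"
    using growth a by (intro mult_left_mono) auto
  also have "\<dots> = (2 * a / mu \<rho>) / (real k + 1)\<^sup>2 * (F x0 - fstar)" using mu by (simp add: field_simps)
  also have "\<dots> \<le> nb\<^sup>2 / (real k + 1)\<^sup>2 * (F x0 - fstar)"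
    using nb fstar_le_F[OF x0_fin] by (intro mult_right_mono divide_right_mono) auto
  finally show "F (A x0 k) - fstar \<le> nb\<^sup>2 / (real k + 1)\<^sup>2 * (F x0 - fstar)" .
qed

lemma Ad_x_in_Vlev: "r \<in> Vlev f \<rho> \<Longrightarrow> Ad_x f A r k \<in> Vlev f \<rho>"
  by (erule Vlev_le) (rule Ad_x_le)

lemma gap_Ad_x_le:
  assumes "r \<in> Vlev f \<rho>" "1 \<le> k"
  shows "F (Ad_x f A r k) - fstar \<le> nb\<^sup>2 / (real k + 1)\<^sup>2 * (F r - fstar)"
proof -
  have fin: "f (Ad_x f A r k) \<noteq> \<infinity>" using Ad_x_in_Vlev[OF assms(1)] Vlev_iff by blast
  have "ereal (F (Ad_x f A r k)) \<le> ereal (F (A r k))"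
    using Ad_x_le_A[OF assms(2), of f A r] unfolding f_eq_F[OF gap_A_le(1)[OF assms]] f_eq_F[OF fin] .
  then show ?thesis using gap_A_le(2)[OF assms] by simp
qed

text \<open>Halfway, at \<open>K div 2\<close>, the gap has shrunk to a quarter, so the second half cannot
  decrease \<open>f\<close> by more than a third of the decrease in the first half.\<close>

lemma Ad_stop_at:
  assumes r: "r \<in> Vlev f \<rho>" and K: "2 \<le> K" "n \<le> real K" "4 * nb \<le> real K"
  shows "Ad_stop f A r n K"
proof -
  define l where "l = K div 2"
  have l: "1 \<le> l" "2 * nb \<le> real l + 1" using K unfolding l_def by linarith+
  have fin: "f r \<noteq> \<infinity>" "f (Ad_x f A r l) \<noteq> \<infinity>" "f (Ad_x f A r K) \<noteq> \<infinity>"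
    using r Ad_x_in_Vlev[OF r] Vlev_iff by blast+
  have "(2 * nb)\<^sup>2 \<le> (real l + 1)\<^sup>2" using l nb_ge_half by (intro power_mono) auto
  then have "nb\<^sup>2 / (real l + 1)\<^sup>2 \<le> 1/4" by (simp add: divide_simps power_mult_distrib)
  then have "nb\<^sup>2 / (real l + 1)\<^sup>2 * (F r - fstar) \<le> 1/4 * (F r - fstar)"
    using fstar_le_F[OF fin(1)] by (intro mult_right_mono) auto
  then have "F (Ad_x f A r l) - fstar \<le> (F r - fstar) / 4"
    using gap_Ad_x_le[OF r l(1)] by linarith
  then have "F (Ad_x f A r l) - F (Ad_x f A r K) \<le> (F r - F (Ad_x f A r l)) / 3"
    using fstar_le_F[OF fin(3)] by simp
  then have "f (Ad_x f A r l) - f (Ad_x f A r K) \<le> (f r - f (Ad_x f A r l)) / 3"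
    using f_eq_F[OF fin(1)] f_eq_F[OF fin(2)] f_eq_F[OF fin(3)] by simp
  then show ?thesis unfolding Ad_stop_def l_def using K by simp
qed

lemma Ad_m_le:
  assumes "r \<in> Vlev f \<rho>"
  shows "Ad_stop f A r n (Ad_m f A r n)" "Ad_m f A r n \<le> max (nat \<lceil>n\<rceil>) (nat \<lceil>4 * nb\<rceil>)"
proof -
  have stop: "Ad_stop f A r n (max (nat \<lceil>n\<rceil>) (nat \<lceil>4 * nb\<rceil>))"
    using nb_ge_half by (intro Ad_stop_at[OF assms]) linarith+
  then show "Ad_stop f A r n (Ad_m f A r n)" unfolding Ad_m_def by (rule LeastI)
  show "Ad_m f A r n \<le> max (nat \<lceil>n\<rceil>) (nat \<lceil>4 * nb\<rceil>)"
    unfolding Ad_m_def using stop by (rule Least_le)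
qed

end

locale restart_run = restart_setting +
  fixes z0 assumes z0: "z0 \<in> Vlev f \<rho>"
begin

abbreviation "zz j \<equiv> Astar_z f A z0 j"
abbreviation "mm j \<equiv> Astar_m f A z0 j"
abbreviation "nn j \<equiv> Astar_n f A z0 j"

lemma mm_Suc: "mm (Suc j) = Ad_m f A (zz j) (nn j)"
  by (simp only: Astar_zm_Suc_eq snd_conv)

lemma zz_Suc: "zz (Suc j) = Ad_x f A (zz j) (mm (Suc j))"
  by (simp only: Astar_zm_Suc_eq fst_conv snd_conv Ad_z_def)

lemma zz_in_Vlev: "zz j \<in> Vlev f \<rho>"
  by (induction j) (simp_all add: z0 zz_Suc Ad_x_in_Vlev)

lemma zz_finite: "f (zz j) \<noteq> \<infinity>"
  using zz_in_Vlev Vlev_iff by blast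

lemma real_of_ereal_diff_zz: "real_of_ereal (f (zz i) - f (zz j)) = F (zz i) - F (zz j)"
  using f_eq_F[OF zz_finite[of i]] f_eq_F[OF zz_finite[of j]] by simp

lemma Ad_stop_mm_Suc: "Ad_stop f A (zz j) (nn j) (mm (Suc j))"
  unfolding mm_Suc using Ad_m_le(1)[OF zz_in_Vlev] .

lemma mm_Suc_ge: "1 \<le> mm (Suc j)" "nn j \<le> real (mm (Suc j))"
  using Ad_stop_mm_Suc[of j] unfolding Ad_stop_def by auto

lemma F_zz_Suc_le: "F (zz (Suc j)) \<le> F (zz j)"
  using zz_Suc Ad_x_le[of f A "zz j"] f_eq_F zz_finite by (metis ereal_less_eq(3))

lemma F_zz_le: "F (zz j) \<le> F z0"
  by (induction j) (auto intro: order_trans[OF F_zz_Suc_le])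

lemma nn_eq:
  "nn j = max (real (mm j))
    (4 * (if 2 \<le> j then sqrt ((F (zz (j - 1)) - F (zz j)) / (F (zz (j - 2)) - F (zz j))) else 0)
      * real (if j = 0 then 1 else mm (j - 1)))"
  by (simp add: Astar_n_def Astar_nval_def Let_def real_of_ereal_diff_zz)

lemma gap_zz_Suc_le: "F (zz (Suc j)) - fstar \<le> nb\<^sup>2 / (real (mm (Suc j)) + 1)\<^sup>2 * (F (zz j) - fstar)"
  unfolding zz_Suc using gap_Ad_x_le[OF zz_in_Vlev mm_Suc_ge(1)] .

lemma restart_ratio_le:
  "4 * sqrt ((F (zz (Suc i)) - F (zz (Suc (Suc i)))) / (F (zz i) - F (zz (Suc (Suc i)))))
    * real (mm (Suc i)) \<le> 4 * nb" (is "4 * sqrt ?q * ?m \<le> _")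
proof -
  have m: "1 \<le> ?m" using mm_Suc_ge(1)[of i] by simp
  have nb: "0 < nb" using nb_ge_half by simp
  have "?q = ((F (zz (Suc i)) - fstar) - (F (zz (Suc (Suc i))) - fstar))
      / ((F (zz i) - fstar) - (F (zz (Suc (Suc i))) - fstar))"
    by simp
  also have "\<dots> \<le> nb\<^sup>2 / (?m + 1)\<^sup>2"
    using fstar_le_F[OF zz_finite] F_zz_Suc_le gap_zz_Suc_le[of i] by (intro diff_ratio_le) auto
  finally have "sqrt ?q \<le> nb / (?m + 1)"
    using nb m by (intro real_le_lsqrt) (auto simp: power_divide)
  then have "4 * sqrt ?q * ?m \<le> 4 * (nb / (?m + 1)) * ?m"
    using m by (intro mult_right_mono) auto
  also have "\<dots> \<le> 4 * nb" using nb m by (simp add: divide_simps)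
  finally show ?thesis .
qed

lemma nn_le: "nn j \<le> max (real (mm j)) (4 * nb)"
proof -
  consider "j = 0" | "j = 1" | i where "j = Suc (Suc i)" by (metis One_nat_def not0_implies_Suc)
  then show ?thesis
  proof cases
    case 3
    have "nn j = max (real (mm j))
        (4 * sqrt ((F (zz (Suc i)) - F (zz (Suc (Suc i)))) / (F (zz i) - F (zz (Suc (Suc i))))) * real (mm (Suc i)))"
      unfolding 3 nn_eq by simp
    then show ?thesis using max.mono[OF order_refl restart_ratio_le[of i]] by simp
  qed (use nb_ge_half in \<open>simp_all add: nn_eq\<close>)
qed

lemma mm_bounds: "1 \<le> mm j" "real (mm j) \<le> real_of_int \<lceil>4 * nb\<rceil>"
proof (induction j)
  case 0
  show "1 \<le> mm 0" "real (mm 0) \<le> real_of_int \<lceil>4 * nb\<rceil>" using nb_ge_half by auto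
next
  case (Suc j)
  have "nn j \<le> real_of_int \<lceil>4 * nb\<rceil>" using nn_le[of j] Suc(2) by linarith
  then have "nat \<lceil>nn j\<rceil> \<le> nat \<lceil>4 * nb\<rceil>" by (simp add: ceiling_le nat_mono)
  then have "mm (Suc j) \<le> nat \<lceil>4 * nb\<rceil>" using Ad_m_le(2)[OF zz_in_Vlev, of j "nn j"] mm_Suc by simp
  then have "int (mm (Suc j)) \<le> \<lceil>4 * nb\<rceil>" using nb_ge_half by (simp add: le_nat_iff)
  then show "real (mm (Suc j)) \<le> real_of_int \<lceil>4 * nb\<rceil>" by (metis of_int_le_iff of_int_of_nat_eq)
  show "1 \<le> mm (Suc j)" by (rule mm_Suc_ge(1))
qed

lemma mm_mono: "mm j \<le> mm (Suc j)"
  using nn_eq[of j] mm_Suc_ge(2)[of j] by simp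

lemma mm_growth:
  "4 * real (mm (i + 1))
      * sqrt ((F (zz (i + 1)) - F (zz (i + 2))) / ((F (zz i) - F (zz (i + 1))) + (F (zz (i + 1)) - F (zz (i + 2)))))
    \<le> real (mm (i + 3))"
  using nn_eq[of "Suc (Suc i)"] mm_Suc_ge(2)[of "Suc (Suc i)"] by (simp add: numeral_eq_Suc algebra_simps)

lemma Astar_stop_iff: "Astar_stop f A z0 \<epsilon> j \<longleftrightarrow> F (zz j) - F (zz (Suc j)) \<le> \<epsilon>"
  unfolding Astar_stop_def using f_eq_F[OF zz_finite[of j]] f_eq_F[OF zz_finite[of "Suc j"]] by simp

lemma Astar_terminates:
  assumes "0 < \<epsilon>"
  shows "\<exists>j. Astar_stop f A z0 \<epsilon> j"
proof (rule ccontr)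
  assume "\<nexists>j. Astar_stop f A z0 \<epsilon> j"
  then have descent: "\<epsilon> < F (zz j) - F (zz (Suc j))" for j by (auto simp: Astar_stop_iff not_le)
  have descent_sum: "F (zz j) \<le> F z0 - real j * \<epsilon>" for j
  proof (induction j)
    case (Suc j)
    then show ?case using descent[of j] by (simp add: algebra_simps)
  qed simp
  obtain j :: nat where "(F z0 - fstar) / \<epsilon> < real j" using reals_Archimedean2 by blast
  then show False using descent_sum[of j] fstar_le_F[OF zz_finite, of j] assms by (simp add: field_simps)
qed

lemma total_iterations_le:
  assumes "0 < \<epsilon>"
  shows "(\<Sum>j\<le>Astar_jout f A z0 \<epsilon>. real (mm (Suc j)))
    \<le> exp 1 * real_of_int \<lceil>4 * nb\<rceil> / 2
      * real_of_int \<lceil>5 + 1 / ln 15 * ln (1 + real_of_ereal (f z0 - fmin f) / \<epsilon>)\<rceil>"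
proof -
  define T where "T = Astar_jout f A z0 \<epsilon>"
  define M where "M = real_of_int \<lceil>4 * nb\<rceil>"
  define H where "H = F z0 - fstar"
  define B where "B = log 15 (1 + H / \<epsilon>)"
  have z0_finite: "f z0 \<noteq> \<infinity>" using z0 Vlev_iff by blast
  have H: "0 \<le> H" "real_of_ereal (f z0 - fmin f) = H"
    using fstar_le_F[OF z0_finite] f_eq_F[OF z0_finite] unfolding H_def fmin_eq by auto
  have B: "0 \<le> B"
    unfolding B_def using H(1) assms by (simp add: zero_le_log_cancel_iff add_pos_nonneg)
  have D: "\<epsilon> < F (zz i) - F (zz (Suc i)) \<and> log 15 ((F (zz i) - F (zz (Suc i))) / \<epsilon>) \<le> B"
    if "i < T" for i
  proof
    show "\<epsilon> < F (zz i) - F (zz (Suc i))"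
      using not_less_Least[of i "Astar_stop f A z0 \<epsilon>"] that
      unfolding T_def Astar_jout_def Astar_stop_iff by simp
    moreover have "F (zz i) - F (zz (Suc i)) \<le> H"
      using F_zz_le[of i] fstar_le_F[OF zz_finite[of "Suc i"]] unfolding H_def by simp
    then have "(F (zz i) - F (zz (Suc i))) / \<epsilon> \<le> 1 + H / \<epsilon>"
      using divide_right_mono[of "F (zz i) - F (zz (Suc i))" H \<epsilon>] assms by linarith
    ultimately show "log 15 ((F (zz i) - F (zz (Suc i))) / \<epsilon>) \<le> B"
      using assms H(1) unfolding B_def by (subst log_le_cancel_iff) (auto intro: add_pos_nonneg)
  qed
  have "(\<Sum>j\<le>T. real (mm (Suc j))) \<le> 6 * M + 39/29 * M * B"
    using mm_mono mm_bounds assms B D mm_growth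
    by (intro sum_restart_lengths_le[where m = "\<lambda>j. real (mm j)" and D = "\<lambda>i. F (zz i) - F (zz (Suc i))"])
      (auto simp: M_def)
  also have "\<dots> \<le> exp 1 * M / 2 * real_of_int \<lceil>5 + B\<rceil>"
    using nb_ge_half B unfolding M_def by (intro restart_constant_le) auto
  finally show ?thesis unfolding T_def M_def B_def H(2) by (simp add: log_def)
qed

end

theorem theorem1:
  fixes f :: "real^'n \<Rightarrow> ereal" and N :: "real^'n \<Rightarrow> real"
    and A :: "real^'n \<Rightarrow> nat \<Rightarrow> real^'n" and mu :: "real \<Rightarrow> real"
    and a L :: real and g :: "real^'n \<Rightarrow> real^'n"
    and \<rho> \<epsilon> :: real and z0 :: "real^'n"
  assumes "proper_fun f" and "convex_fun f" and "closed_fun f" and "solvable f"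
    and "is_norm N"
    and "\<forall>x0. A x0 0 = x0"
    and "assumptionA N f A mu a L g"
    and "\<rho> > 0" and "z0 \<in> Vlev f \<rho>" and "\<epsilon> > 0"
  shows "(\<exists>j. Astar_stop f A z0 \<epsilon> j)
    \<and> (\<forall>j \<le> Astar_jout f A z0 \<epsilon>.
          (\<exists>k. Ad_stop f A (Astar_z f A z0 j) (Astar_n f A z0 j) k)
        \<and> real (Astar_m f A z0 (Suc j)) \<le> real_of_int \<lceil>4 * nbar a (mu \<rho>)\<rceil>)
    \<and> (\<Sum>j\<le>Astar_jout f A z0 \<epsilon>. real (Astar_m f A z0 (Suc j)))
        \<le> exp 1 * real_of_int \<lceil>4 * nbar a (mu \<rho>)\<rceil> / 2 *
          real_of_int \<lceil>5 + 1 / ln 15 * ln (1 + real_of_ereal (f z0 - fmin f) / \<epsilon>)\<rceil>"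
proof -
  interpret restart_run f N A mu a L g \<rho> z0
    using assms by unfold_locales auto
  show ?thesis
    using Astar_terminates Ad_stop_mm_Suc mm_bounds(2) total_iterations_le \<open>\<epsilon> > 0\<close> by blast
qed

end
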